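(* For every integer $n>2$ there exist two pedigrees $\mathcal{T}(X_0)$ and $\mathcal{U}(X_0)$ on the same extant set $X_0$ with $|X_0|=n$ such that (i) for every $Y\subset X_0$ with $|Y|=n-1$ there is an isomorphism from the sub-pedigree $\mathcal{T}(Y)$ to the sub-pedigree $\mathcal{U}(Y)$ fixing every vertex of $Y$; but (ii) there is no isomorphism from $\mathcal{T}(X_0)$ to $\mathcal{U}(X_0)$ fixing every vertex of $X_0$. In particular, for every $n>3$ there are pedigrees of order $n$ that are not $(n-1)$-reconstructible.
   Context: A (general) pedigree $\mathcal{T}(X_0)$ on a set $X_0$ is a finite directed graph on a vertex set $V$ such that: every vertex has out-degree $0$ or $2$; $X_0\subseteq V$ and every vertex of $X_0$ has in-degree $0$; there are no isolated vertices. Vertices of $X_0$ are called extant; $|X_0|$ is the order of the pedigree. If $uv$ is an arc, $v$ is a parent of $u$. A vertex $v$ is an ancestor of $u$ (and $u$ a descendant of $v$) if there is a directed path from $u$ to $v$ (every vertex is its own ancestor and descendant). For $Y\subseteq X_0$, the sub-pedigree $\mathcal{T}(Y)$ is obtained from $\mathcal{T}(X_0)$ by deleting every vertex that has no descendant in $Y$; its extant set is $Y$. An isomorphism of pedigrees is a bijection of vertex sets preserving arcs in both directions. For $n>r>2$, two pedigrees of order $n$ on the same extant set $X_0$ are $r$-hypomorphic if for every $Y\subset X_0$ with $|Y|=r$ there is an isomorphism $\mathcal{T}(Y)\to\mathcal{U}(Y)$ fixing each vertex of $Y$; $\mathcal{T}(X_0)$ is $r$-reconstructible if every pedigree $\mathcal{U}(X_0)$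 that is $r$-hypomorphic to it is isomorphic to it via an isomorphism fixing each vertex of $X_0$. *)

theory Defs
  imports Main
begin

text \<open>A pedigree is a finite loopless simple digraph given by a vertex set V and an arc
set A (an arc (u,v) means v is a parent of u), together with an extant set X0.\<close>

definition pedigree :: "'v set \<Rightarrow> ('v \<times> 'v) set \<Rightarrow> 'v set \<Rightarrow> bool" where
  "pedigree V A X0 \<longleftrightarrow>
     finite V \<and> A \<subseteq> V \<times> V \<and> (\<forall>v. (v, v) \<notin> A) \<and>
     (\<forall>v\<in>V. card {w. (v, w) \<in> A} = 0 \<or> card {w. (v, w) \<in> A} = 2) \<and>
     X0 \<subseteq> V \<and> (\<forall>x\<in>X0. \<forall>u. (u, x) \<notin> A) \<and>
     (\<forall>v\<in>V. \<exists>w. (v, w) \<in> A \<or> (w, v) \<in> A)"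

definition sub_vertices :: "'v set \<Rightarrow> ('v \<times> 'v) set \<Rightarrow> 'v set \<Rightarrow> 'v set" where
  "sub_vertices V A Y = {v \<in> V. \<exists>y\<in>Y. (y, v) \<in> A\<^sup>*}"

definition sub_arcs :: "'v set \<Rightarrow> ('v \<times> 'v) set \<Rightarrow> 'v set \<Rightarrow> ('v \<times> 'v) set" where
  "sub_arcs V A Y = A \<inter> (sub_vertices V A Y \<times> sub_vertices V A Y)"

definition iso_fixing :: "('v \<Rightarrow> 'w) \<Rightarrow> 'v set \<Rightarrow> ('v \<times> 'v) set \<Rightarrow> 'w set \<Rightarrow> ('w \<times> 'w) set
    \<Rightarrow> bool" where
  "iso_fixing f V1 A1 V2 A2 \<longleftrightarrow>
     bij_betw f V1 V2 \<and> (\<forall>u\<in>V1. \<forall>v\<in>V1. (u, v) \<in> A1 \<longleftrightarrow> (f u, f v) \<in> A2)"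

definition sub_iso :: "'v set \<Rightarrow> ('v \<times> 'v) set \<Rightarrow> 'v set \<Rightarrow> ('v \<times> 'v) set \<Rightarrow> 'v set \<Rightarrow> bool" where
  "sub_iso V1 A1 V2 A2 Y \<longleftrightarrow>
     (\<exists>f. iso_fixing f (sub_vertices V1 A1 Y) (sub_arcs V1 A1 Y)
                      (sub_vertices V2 A2 Y) (sub_arcs V2 A2 Y) \<and> (\<forall>y\<in>Y. f y = y))"

definition hypomorphic :: "nat \<Rightarrow> 'v set \<Rightarrow> ('v \<times> 'v) set \<Rightarrow> 'v set \<Rightarrow> ('v \<times> 'v) set \<Rightarrow> 'v set \<Rightarrow> bool" where
  "hypomorphic r V1 A1 V2 A2 X0 \<longleftrightarrow>
     (\<forall>Y. Y \<subset> X0 \<and> card Y = r \<longrightarrow> sub_iso V1 A1 V2 A2 Y)"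

definition reconstructible :: "nat \<Rightarrow> 'v set \<Rightarrow> ('v \<times> 'v) set \<Rightarrow> 'v set \<Rightarrow> bool" where
  "reconstructible r V A X0 \<longleftrightarrow>
     (\<forall>V' A'. pedigree V' A' X0 \<and> hypomorphic r V A V' A' X0 \<longrightarrow> sub_iso V A V' A' X0)"

end

theory Submission
  imports Defs
begin

(* Take n extant vertices extant_vx j, each with the two parents parent_vx s j (s a Boolean side),
   and 2n founders founder_vx s j.  The parent on side s of j descends from the founders on side s of
   j and of j + 1 (mod n), so each side forms a cycle of parents and founders.  The twisted pedigree
   differs only at j = n - 1, whose parents reach across to the other side at index 0, so that the two
   cycles merge into one.
   Removing extant_vx k also removes its parents and cuts both cycles open; flipping the sides of all
   vertices with index beyond k then untwists the pedigree, so all sub-pedigrees on n - 1 extant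
   vertices agree.  On the whole pedigree, an isomorphism fixing the extant vertices flips or keeps the
   sides of the parents of each j; for n >= 3 the common founder of consecutive parents forces the same
   choice at j and j + 1, while the twist forces opposite choices at n - 1 and 0. *)

lemma pedigree_parentsI:
  assumes "finite V" and "X0 \<subseteq> V"
    and parents_in: "\<And>u. u \<in> V \<Longrightarrow> P u \<subseteq> V"
    and "\<And>u. u \<notin> P u"
    and card_parents: "\<And>u. u \<in> V \<Longrightarrow> card (P u) = 0 \<or> card (P u) = 2"
    and "\<And>u x. x \<in> X0 \<Longrightarrow> x \<notin> P u"
    and not_isolated: "\<And>v. v \<in> V \<Longrightarrow> P v \<noteq> {} \<or> (\<exists>u\<in>V. v \<in> P u)"
  shows "pedigree V {(u, w). u \<in> V \<and> w \<in> P u} X0"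
  unfolding pedigree_def
proof (intro conjI ballI allI)
  let ?A = "{(u, w). u \<in> V \<and> w \<in> P u}"
  show "?A \<subseteq> V \<times> V"
    using parents_in by blast
  fix v assume "v \<in> V"
  then have "{w. (v, w) \<in> ?A} = P v"
    by simp
  with \<open>v \<in> V\<close> card_parents show "card {w. (v, w) \<in> ?A} = 0 \<or> card {w. (v, w) \<in> ?A} = 2"
    by simp
  show "\<exists>w. (v, w) \<in> ?A \<or> (w, v) \<in> ?A"
    using not_isolated [OF \<open>v \<in> V\<close>] \<open>v \<in> V\<close> by blast
qed (use assms in auto)

lemma sub_vertices_eqI:
  assumes "S \<subseteq> V" and "Y \<subseteq> S"
    and closed: "\<And>u w. u \<in> S \<Longrightarrow> (u, w) \<in> A \<Longrightarrow> w \<in> S"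
    and reach: "\<And>v. v \<in> S \<Longrightarrow> \<exists>y\<in>Y. (y, v) \<in> A\<^sup>*"
  shows "sub_vertices V A Y = S"
proof
  show "sub_vertices V A Y \<subseteq> S"
  proof
    fix v assume "v \<in> sub_vertices V A Y"
    then obtain y where "(y, v) \<in> A\<^sup>*" and "y \<in> S"
      using \<open>Y \<subseteq> S\<close> unfolding sub_vertices_def by blast
    then show "v \<in> S"
      by (induction rule: rtrancl_induct) (auto intro: closed)
  qed
  show "S \<subseteq> sub_vertices V A Y"
    using reach \<open>S \<subseteq> V\<close> unfolding sub_vertices_def by blast
qed

lemma sub_iso_iff:
  assumes "sub_vertices V A Y = S" and "sub_vertices V' A' Y = S'"
  shows "sub_iso V A V' A' Y \<longleftrightarrow>
    (\<exists>f. bij_betw f S S' \<and> (\<forall>u\<in>S. \<forall>w\<in>S. (u, w) \<in> A \<longleftrightarrow> (f u, f w) \<in> A') \<and> (\<forall>y\<in>Y. f y = y))"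
proof -
  have "(\<forall>u\<in>S. \<forall>w\<in>S. (u, w) \<in> A \<inter> S \<times> S \<longleftrightarrow> (f u, f w) \<in> A' \<inter> S' \<times> S') \<longleftrightarrow>
      (\<forall>u\<in>S. \<forall>w\<in>S. (u, w) \<in> A \<longleftrightarrow> (f u, f w) \<in> A')" if "bij_betw f S S'" for f
    using bij_betwE [OF that] by (simp add: ball_simps)
  then show ?thesis
    unfolding sub_iso_def iso_fixing_def sub_arcs_def assms by blast
qed

lemma psubset_card_diff_one:
  assumes "finite X" and "Y \<subset> X" and "card Y = card X - 1"
  obtains x where "x \<in> X" and "Y = X - {x}"
proof -
  obtain x where x: "x \<in> X" "x \<notin> Y"
    using \<open>Y \<subset> X\<close> by blast
  have "Y \<subseteq> X - {x}" and "card (X - {x}) = card Y"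
    using assms x by auto
  then have "Y = X - {x}"
    using card_subset_eq \<open>finite X\<close> by (metis finite_Diff)
  with x that show ?thesis by blast
qed

definition vertex_code :: "nat \<Rightarrow> nat \<Rightarrow> nat" where
  "vertex_code c j = 5 * j + c"

lemma vertex_code_div_mod:
  assumes "c < 5"
  shows "vertex_code c j div 5 = j" and "vertex_code c j mod 5 = c"
  using assms by (simp_all add: vertex_code_def)

lemma vertex_code_eq_iff:
  assumes "c < 5" and "d < 5"
  shows "vertex_code c i = vertex_code d j \<longleftrightarrow> c = d \<and> i = j"
  by (metis assms vertex_code_div_mod)

lemma vertex_code_less_iff:
  "c < 5 \<Longrightarrow> vertex_code c j < 5 * n \<longleftrightarrow> j < n"
  unfolding vertex_code_def by linarith

definition extant_vx :: "nat \<Rightarrow> nat" where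
  "extant_vx = vertex_code 0"

definition parent_vx :: "bool \<Rightarrow> nat \<Rightarrow> nat" where
  "parent_vx s = vertex_code (1 + of_bool s)"

definition founder_vx :: "bool \<Rightarrow> nat \<Rightarrow> nat" where
  "founder_vx s = vertex_code (3 + of_bool s)"

lemmas vertex_defs = extant_vx_def parent_vx_def founder_vx_def

lemma vertex_eq_iff [simp]:
  "extant_vx i = extant_vx j \<longleftrightarrow> i = j"
  "parent_vx s i = parent_vx t j \<longleftrightarrow> s = t \<and> i = j"
  "founder_vx s i = founder_vx t j \<longleftrightarrow> s = t \<and> i = j"
  "extant_vx i \<noteq> parent_vx s j" "parent_vx s j \<noteq> extant_vx i"
  "extant_vx i \<noteq> founder_vx s j" "founder_vx s j \<noteq> extant_vx i"
  "parent_vx s i \<noteq> founder_vx t j" "founder_vx t j \<noteq> parent_vx s i"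
  by (cases s; cases t; simp add: vertex_defs vertex_code_eq_iff)+

lemma vertex_cases:
  obtains (extant) j where "v = extant_vx j" | (parent) s j where "v = parent_vx s j"
  | (founder) s j where "v = founder_vx s j"
proof -
  have "v = vertex_code (v mod 5) (v div 5)"
    by (simp add: vertex_code_def)
  moreover have
    "v mod 5 \<in> {0, 1 + of_bool False, 1 + of_bool True, 3 + of_bool False, 3 + of_bool True}"
    by auto
  ultimately show ?thesis
    using that unfolding vertex_defs by (auto simp del: of_bool_eq)
qed

definition case_vertex ::
    "(nat \<Rightarrow> 'a) \<Rightarrow> (bool \<Rightarrow> nat \<Rightarrow> 'a) \<Rightarrow> (bool \<Rightarrow> nat \<Rightarrow> 'a) \<Rightarrow> nat \<Rightarrow> 'a" where
  "case_vertex e p f v =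
     (if v mod 5 = 0 then e (v div 5)
      else if v mod 5 \<le> 2 then p (v mod 5 = 2) (v div 5)
      else f (v mod 5 = 4) (v div 5))"

lemma case_vertex_simps [simp]:
  "case_vertex e p f (extant_vx j) = e j"
  "case_vertex e p f (parent_vx s j) = p s j"
  "case_vertex e p f (founder_vx s j) = f s j"
  by (cases s; simp add: case_vertex_def vertex_defs vertex_code_div_mod)+

definition ring_vertices :: "nat \<Rightarrow> nat set" where
  "ring_vertices n = {..<5 * n}"

definition ring_extant :: "nat \<Rightarrow> nat set" where
  "ring_extant n = extant_vx ` {..<n}"

definition ring_parents :: "bool \<Rightarrow> nat \<Rightarrow> nat \<Rightarrow> nat set" where
  "ring_parents twisted n = case_vertex
     (\<lambda>j. {parent_vx False j, parent_vx True j})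
     (\<lambda>s j. {founder_vx s j, founder_vx (s \<noteq> (twisted \<and> Suc j = n)) (Suc j mod n)})
     (\<lambda>_ _. {})"

definition ring_arcs :: "bool \<Rightarrow> nat \<Rightarrow> (nat \<times> nat) set" where
  "ring_arcs twisted n = {(u, w). u \<in> ring_vertices n \<and> w \<in> ring_parents twisted n u}"

lemma ring_parents_simps [simp]:
  "ring_parents twisted n (extant_vx j) = {parent_vx False j, parent_vx True j}"
  "ring_parents twisted n (parent_vx s j) =
     {founder_vx s j, founder_vx (s \<noteq> (twisted \<and> Suc j = n)) (Suc j mod n)}"
  "ring_parents twisted n (founder_vx s j) = {}"
  by (simp_all add: ring_parents_def)

lemma ring_vertices_iff [simp]:
  "extant_vx j \<in> ring_vertices n \<longleftrightarrow> j < n"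
  "parent_vx s j \<in> ring_vertices n \<longleftrightarrow> j < n"
  "founder_vx s j \<in> ring_vertices n \<longleftrightarrow> j < n"
  by (cases s; simp add: ring_vertices_def vertex_defs vertex_code_less_iff)+

lemma ring_arcs_iff:
  "(u, w) \<in> ring_arcs twisted n \<longleftrightarrow> u \<in> ring_vertices n \<and> w \<in> ring_parents twisted n u"
  by (simp add: ring_arcs_def)

lemma card_ring_extant: "card (ring_extant n) = n"
  by (simp add: ring_extant_def card_image inj_on_def)

lemma neq_Suc_mod: "2 \<le> n \<Longrightarrow> j < n \<Longrightarrow> j \<noteq> Suc j mod n"
  by (auto simp: mod_Suc)

lemma neq_Suc_Suc_mod: "3 \<le> n \<Longrightarrow> j < n \<Longrightarrow> j \<noteq> Suc (Suc j mod n) mod n"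
  by (auto simp: mod_Suc)

lemma pedigree_ring:
  assumes "2 \<le> n"
  shows "pedigree (ring_vertices n) (ring_arcs twisted n) (ring_extant n)"
  unfolding ring_arcs_def
proof (rule pedigree_parentsI)
  show "finite (ring_vertices n)"
    by (simp add: ring_vertices_def)
  show "ring_extant n \<subseteq> ring_vertices n"
    by (auto simp: ring_extant_def)
  fix u
  show "u \<in> ring_vertices n \<Longrightarrow> ring_parents twisted n u \<subseteq> ring_vertices n"
    by (cases u rule: vertex_cases) auto
  show "u \<notin> ring_parents twisted n u"
    by (cases u rule: vertex_cases) auto
  show "u \<in> ring_vertices n \<Longrightarrow>
      card (ring_parents twisted n u) = 0 \<or> card (ring_parents twisted n u) = 2"
    using neq_Suc_mod [OF assms] by (cases u rule: vertex_cases) (auto simp: card_insert_if)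
  show "x \<in> ring_extant n \<Longrightarrow> x \<notin> ring_parents twisted n u" for x
    by (cases u rule: vertex_cases) (auto simp: ring_extant_def)
next
  fix v assume "v \<in> ring_vertices n"
  then show "ring_parents twisted n v \<noteq> {} \<or> (\<exists>u\<in>ring_vertices n. v \<in> ring_parents twisted n u)"
    by (cases v rule: vertex_cases) (auto intro!: bexI [of _ "parent_vx _ _"])
qed

lemma ring_reach:
  assumes "j < n"
  shows "(extant_vx j, parent_vx s j) \<in> (ring_arcs twisted n)\<^sup>*"
    and "(extant_vx j, founder_vx s j) \<in> (ring_arcs twisted n)\<^sup>*"
    and "(extant_vx j, founder_vx s (Suc j mod n)) \<in> (ring_arcs twisted n)\<^sup>*"
proof -
  define s' where "s' = (s \<noteq> (twisted \<and> Suc j = n))"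
  have arcs: "(extant_vx j, parent_vx s j) \<in> ring_arcs twisted n"
    "(extant_vx j, parent_vx s' j) \<in> ring_arcs twisted n"
    "(parent_vx s j, founder_vx s j) \<in> ring_arcs twisted n"
    "(parent_vx s' j, founder_vx s (Suc j mod n)) \<in> ring_arcs twisted n"
    using assms by (auto simp: ring_arcs_iff s'_def)
  then show "(extant_vx j, parent_vx s j) \<in> (ring_arcs twisted n)\<^sup>*"
    and "(extant_vx j, founder_vx s j) \<in> (ring_arcs twisted n)\<^sup>*"
    and "(extant_vx j, founder_vx s (Suc j mod n)) \<in> (ring_arcs twisted n)\<^sup>*"
    by (meson converse_rtrancl_into_rtrancl r_into_rtrancl)+
qed

lemma sub_vertices_ring:
  "sub_vertices (ring_vertices n) (ring_arcs twisted n) (ring_extant n) = ring_vertices n"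
proof (rule sub_vertices_eqI)
  show "ring_extant n \<subseteq> ring_vertices n"
    by (auto simp: ring_extant_def)
  show "w \<in> ring_vertices n" if "(u, w) \<in> ring_arcs twisted n" for u w
    using that by (cases u rule: vertex_cases) (auto simp: ring_arcs_iff)
  show "\<exists>y\<in>ring_extant n. (y, v) \<in> (ring_arcs twisted n)\<^sup>*" if "v \<in> ring_vertices n" for v
    using that ring_reach unfolding ring_extant_def by (cases v rule: vertex_cases) fastforce+
qed simp

lemma sub_vertices_ring_remove:
  assumes "k < n" and "2 \<le> n"
  shows "sub_vertices (ring_vertices n) (ring_arcs twisted n) (ring_extant n - {extant_vx k}) =
    ring_vertices n - {extant_vx k, parent_vx False k, parent_vx True k}"
    (is "_ = ?S")
proof (rule sub_vertices_eqI)
  show "ring_extant n - {extant_vx k} \<subseteq> ?S"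
    by (auto simp: ring_extant_def)
  show "w \<in> ?S" if "u \<in> ?S" and "(u, w) \<in> ring_arcs twisted n" for u w
    using that by (cases u rule: vertex_cases) (auto simp: ring_arcs_iff)
  \<comment> \<open>the founders of index k are still reached from the cyclic predecessor p of k\<close>
  obtain p where p: "p < n" "p \<noteq> k" "Suc p mod n = k"
  proof (cases k)
    case 0
    with assms that [of "n - 1"] show ?thesis by auto
  next
    case (Suc i)
    with assms that [of i] show ?thesis by auto
  qed
  show "\<exists>y\<in>ring_extant n - {extant_vx k}. (y, v) \<in> (ring_arcs twisted n)\<^sup>*" if "v \<in> ?S" for v
  proof (cases v rule: vertex_cases)
    case (extant j)
    with that show ?thesis
      by (auto simp: ring_extant_def)
  next
    case (parent s j)
    with that ring_reach(1) [of j n s twisted] show ?thesis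
      by (auto simp: ring_extant_def)
  next
    case (founder s j)
    show ?thesis
    proof (cases "j = k")
      case True
      with founder ring_reach(3) [OF p(1), of s twisted] p show ?thesis
        by (auto simp: ring_extant_def)
    next
      case False
      with founder that ring_reach(2) [of j n s twisted] show ?thesis
        by (auto simp: ring_extant_def)
    qed
  qed
qed simp

definition flip_after :: "nat \<Rightarrow> nat \<Rightarrow> nat" where
  "flip_after k = case_vertex extant_vx
     (\<lambda>s j. parent_vx (s \<noteq> (k < j)) j) (\<lambda>s j. founder_vx (s \<noteq> (k < j)) j)"

lemma flip_after_simps [simp]:
  "flip_after k (extant_vx j) = extant_vx j"
  "flip_after k (parent_vx s j) = parent_vx (s \<noteq> (k < j)) j"
  "flip_after k (founder_vx s j) = founder_vx (s \<noteq> (k < j)) j"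
  by (simp_all add: flip_after_def)

lemma flip_after_flip_after [simp]: "flip_after k (flip_after k v) = v"
  by (cases v rule: vertex_cases) auto

lemma inj_flip_after: "inj (flip_after k)"
  by (metis injI flip_after_flip_after)

lemma ring_parents_flip_after:
  assumes "k < n" and "v \<in> ring_vertices n" and "\<And>s. v \<noteq> parent_vx s k"
  shows "ring_parents True n (flip_after k v) = flip_after k ` ring_parents False n v"
proof (cases v rule: vertex_cases)
  case (parent s j)
  with assms have "j < n" and "j \<noteq> k"
    by auto
  then have "(k < Suc j mod n) = ((k < j) \<noteq> (Suc j = n))"
    using \<open>k < n\<close> by (auto simp: mod_Suc)
  with parent show ?thesis
    by auto
qed auto

lemma ring_sub_iso_remove:
  assumes "k < n" and "2 \<le> n"
  shows "sub_iso (ring_vertices n) (ring_arcs False n) (ring_vertices n) (ring_arcs True n)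
    (ring_extant n - {extant_vx k})"
proof -
  let ?S = "ring_vertices n - {extant_vx k, parent_vx False k, parent_vx True k}"
  have closed: "flip_after k v \<in> ?S" if "v \<in> ?S" for v
    using that by (cases v rule: vertex_cases) auto
  then have "bij_betw (flip_after k) ?S ?S"
    by (intro bij_betw_byWitness [where f' = "flip_after k"]) auto
  moreover have "(u, w) \<in> ring_arcs False n \<longleftrightarrow> (flip_after k u, flip_after k w) \<in> ring_arcs True n"
    if "u \<in> ?S" and "w \<in> ?S" for u w
  proof -
    have "ring_parents True n (flip_after k u) = flip_after k ` ring_parents False n u"
      using that(1) \<open>k < n\<close> by (intro ring_parents_flip_after) auto
    then show ?thesis
      using that closed [OF that(1)]
      by (simp add: ring_arcs_iff inj_image_mem_iff [OF inj_flip_after])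
  qed
  moreover have "\<forall>y\<in>ring_extant n - {extant_vx k}. flip_after k y = y"
    by (auto simp: ring_extant_def)
  ultimately show ?thesis
    using sub_iso_iff [OF sub_vertices_ring_remove sub_vertices_ring_remove] assms by blast
qed

lemma ring_common_parent:
  assumes "3 \<le> n" and "j < n"
    and "w \<in> ring_parents twisted n (parent_vx s j)"
    and "w \<in> ring_parents twisted n (parent_vx s' (Suc j mod n))"
  shows "s' = (s \<noteq> (twisted \<and> Suc j = n))"
  using assms neq_Suc_mod [of n j] neq_Suc_Suc_mod [of n j] by auto

lemma ring_not_sub_iso:
  assumes "3 \<le> n"
  shows "\<not> sub_iso (ring_vertices n) (ring_arcs False n) (ring_vertices n) (ring_arcs True n)
    (ring_extant n)"
proof
  assume "sub_iso (ring_vertices n) (ring_arcs False n) (ring_vertices n) (ring_arcs True n)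
    (ring_extant n)"
  then obtain f where
      arcs: "\<forall>u\<in>ring_vertices n. \<forall>w\<in>ring_vertices n.
        (u, w) \<in> ring_arcs False n \<longleftrightarrow> (f u, f w) \<in> ring_arcs True n"
    and fixed: "\<forall>y\<in>ring_extant n. f y = y"
    unfolding sub_iso_iff [OF sub_vertices_ring sub_vertices_ring] by blast
  have parents: "f w \<in> ring_parents True n (f u)"
    if "u \<in> ring_vertices n" and "w \<in> ring_parents False n u" for u w
  proof -
    have "w \<in> ring_vertices n"
      using that by (cases u rule: vertex_cases) auto
    moreover have "(u, w) \<in> ring_arcs False n"
      using that by (simp add: ring_arcs_iff)
    ultimately have "(f u, f w) \<in> ring_arcs True n"
      using arcs \<open>u \<in> ring_vertices n\<close> by blast
    then show ?thesis
      by (simp add: ring_arcs_iff)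
  qed
  define c where "c j \<longleftrightarrow> f (parent_vx False j) = parent_vx True j" for j
  have f_parent: "f (parent_vx False j) = parent_vx (c j) j" if "j < n" for j
    using parents [of "extant_vx j" "parent_vx False j"] fixed that
    by (auto simp: c_def ring_extant_def)
  have c_next: "c (Suc j mod n) = (c j \<noteq> (Suc j = n))" if "j < n" for j
  proof -
    let ?j' = "Suc j mod n"
    let ?w = "f (founder_vx False ?j')"
    have "?j' < n"
      using that by simp
    have "?w \<in> ring_parents True n (parent_vx (c j) j)"
      using parents [of "parent_vx False j" "founder_vx False ?j'"] f_parent [OF that] that by simp
    moreover have "?w \<in> ring_parents True n (parent_vx (c ?j') ?j')"
      using parents [of "parent_vx False ?j'" "founder_vx False ?j'"] f_parent [OF \<open>?j' < n\<close>]
        \<open>?j' < n\<close> by simp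
    ultimately have "c ?j' = (c j \<noteq> (True \<and> Suc j = n))"
      by (rule ring_common_parent [OF assms that])
    then show ?thesis
      by simp
  qed
  have c_const: "c j = c 0" if "j < n" for j
    using that
  proof (induction j)
    case (Suc j)
    then have "j < n" and "Suc j mod n = Suc j" and "Suc j \<noteq> n"
      by auto
    with c_next [of j] Suc.IH show ?case
      by simp
  qed simp
  have "n - 1 < n" and "Suc (n - 1) = n"
    using assms by auto
  then have "c 0 = (\<not> c (n - 1))"
    using c_next [of "n - 1"] by simp
  with c_const [OF \<open>n - 1 < n\<close>] show False
    by simp
qed

lemma ring_hypomorphic:
  assumes "2 \<le> n"
  shows "hypomorphic (n - 1) (ring_vertices n) (ring_arcs False n) (ring_vertices n) (ring_arcs True n)
    (ring_extant n)"
  unfolding hypomorphic_def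
proof (intro allI impI, elim conjE)
  fix Y assume "Y \<subset> ring_extant n" and "card Y = n - 1"
  moreover have "finite (ring_extant n)"
    by (simp add: ring_extant_def)
  ultimately obtain x where "x \<in> ring_extant n" and Y: "Y = ring_extant n - {x}"
    using psubset_card_diff_one card_ring_extant by metis
  then obtain k where "k < n" and "x = extant_vx k"
    by (auto simp: ring_extant_def)
  with Y assms show "sub_iso (ring_vertices n) (ring_arcs False n) (ring_vertices n) (ring_arcs True n) Y"
    using ring_sub_iso_remove by simp
qed

theorem mainTheorem1:
  shows "(\<forall>n::nat. n > 2 \<longrightarrow>
           (\<exists>(X0::nat set) V A V' A'. card X0 = n \<and> pedigree V A X0 \<and> pedigree V' A' X0 \<and>
              (\<forall>Y. Y \<subset> X0 \<and> card Y = n - 1 \<longrightarrow> sub_iso V A V' A' Y) \<and>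
              \<not> sub_iso V A V' A' X0))
       \<and> (\<forall>n::nat. n > 3 \<longrightarrow>
           (\<exists>(X0::nat set) V A. card X0 = n \<and> pedigree V A X0 \<and> \<not> reconstructible (n - 1) V A X0))"
proof -
  have ring: "card (ring_extant n) = n
      \<and> pedigree (ring_vertices n) (ring_arcs False n) (ring_extant n)
      \<and> pedigree (ring_vertices n) (ring_arcs True n) (ring_extant n)
      \<and> hypomorphic (n - 1) (ring_vertices n) (ring_arcs False n) (ring_vertices n) (ring_arcs True n)
          (ring_extant n)
      \<and> \<not> sub_iso (ring_vertices n) (ring_arcs False n) (ring_vertices n) (ring_arcs True n) (ring_extant n)"
    if "n > 2" for n
    using that by (intro conjI card_ring_extant pedigree_ring ring_hypomorphic ring_not_sub_iso) auto
  show ?thesis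
  proof (intro conjI allI impI)
    fix n :: nat assume "n > 2"
    then show "\<exists>(X0::nat set) V A V' A'. card X0 = n \<and> pedigree V A X0 \<and> pedigree V' A' X0 \<and>
        (\<forall>Y. Y \<subset> X0 \<and> card Y = n - 1 \<longrightarrow> sub_iso V A V' A' Y) \<and> \<not> sub_iso V A V' A' X0"
      using ring unfolding hypomorphic_def by blast
  next
    fix n :: nat assume "n > 3"
    then have "n > 2"
      by simp
    note ring_n = ring [OF this]
    then have "\<not> reconstructible (n - 1) (ring_vertices n) (ring_arcs False n) (ring_extant n)"
      unfolding reconstructible_def by blast
    with ring_n show "\<exists>(X0::nat set) V A. card X0 = n \<and> pedigree V A X0 \<and> \<not> reconstructible (n - 1) V A X0"
      by blast
  qed
qed

end
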